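(* A tree $T$ is $\chi_\rho$-critical if and only if it is $\chi_\rho$-vertex-critical.
   Context: A $k$-packing coloring of a graph $G$ is a map $c:V(G)\to\{1,\ldots,k\}$ such that two distinct vertices $u,v$ with $c(u)=c(v)=i$ satisfy $d_G(u,v)>i$ (distance between vertices in different components is infinite); $\chi_\rho(G)$ is the smallest $k$ for which such a coloring exists. $G$ is $\chi_\rho$-critical if $\chi_\rho(H)<\chi_\rho(G)$ for every proper subgraph $H$ of $G$; $G$ is $\chi_\rho$-vertex-critical if $\chi_\rho(G-x)<\chi_\rho(G)$ for every vertex $x\in V(G)$. *)

theory Defs
  imports Main "HOL-Library.Extended_Nat"
begin

definition graph :: "'a set \<Rightarrow> 'a set set \<Rightarrow> bool" where
  "graph V E \<longleftrightarrow> finite V \<and> (\<forall>e\<in>E. \<exists>u v. e = {u, v} \<and> u \<noteq> v \<and> u \<in> V \<and> v \<in> V)"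

definition adj :: "'a set set \<Rightarrow> 'a \<Rightarrow> 'a \<Rightarrow> bool" where
  "adj E u v \<longleftrightarrow> {u, v} \<in> E"

definition walk :: "'a set \<Rightarrow> 'a set set \<Rightarrow> 'a list \<Rightarrow> bool" where
  "walk V E xs \<longleftrightarrow> xs \<noteq> [] \<and> set xs \<subseteq> V \<and>
     (\<forall>i. Suc i < length xs \<longrightarrow> adj E (xs ! i) (xs ! Suc i))"

text \<open>Distance: length of a shortest walk; infinite if there is none.\<close>
definition gdist :: "'a set \<Rightarrow> 'a set set \<Rightarrow> 'a \<Rightarrow> 'a \<Rightarrow> enat" where
  "gdist V E u v = (INF xs \<in> {xs. walk V E xs \<and> hd xs = u \<and> last xs = v}. enat (length xs - 1))"

definition connected_graph :: "'a set \<Rightarrow> 'a set set \<Rightarrow> bool" where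
  "connected_graph V E \<longleftrightarrow> (\<forall>u\<in>V. \<forall>v\<in>V. \<exists>xs. walk V E xs \<and> hd xs = u \<and> last xs = v)"

definition is_cycle :: "'a set \<Rightarrow> 'a set set \<Rightarrow> 'a list \<Rightarrow> bool" where
  "is_cycle V E xs \<longleftrightarrow> walk V E xs \<and> distinct xs \<and> length xs \<ge> 3 \<and> adj E (last xs) (hd xs)"

definition acyclic_graph :: "'a set \<Rightarrow> 'a set set \<Rightarrow> bool" where
  "acyclic_graph V E \<longleftrightarrow> \<not> (\<exists>xs. is_cycle V E xs)"

definition tree :: "'a set \<Rightarrow> 'a set set \<Rightarrow> bool" where
  "tree V E \<longleftrightarrow> graph V E \<and> V \<noteq> {} \<and> connected_graph V E \<and> acyclic_graph V E"

definition packing_coloring :: "'a set \<Rightarrow> 'a set set \<Rightarrow> nat \<Rightarrow> ('a \<Rightarrow> nat) \<Rightarrow> bool" where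
  "packing_coloring V E k c \<longleftrightarrow> (\<forall>v\<in>V. c v \<in> {1..k}) \<and>
     (\<forall>u\<in>V. \<forall>v\<in>V. u \<noteq> v \<and> c u = c v \<longrightarrow> gdist V E u v > enat (c u))"

definition packing_chromatic :: "'a set \<Rightarrow> 'a set set \<Rightarrow> nat" where
  "packing_chromatic V E = (LEAST k. \<exists>c. packing_coloring V E k c)"

definition subgraph :: "'a set \<Rightarrow> 'a set set \<Rightarrow> 'a set \<Rightarrow> 'a set set \<Rightarrow> bool" where
  "subgraph V' E' V E \<longleftrightarrow> V' \<subseteq> V \<and> E' \<subseteq> E \<and> (\<forall>e\<in>E'. e \<subseteq> V')"

definition proper_subgraph :: "'a set \<Rightarrow> 'a set set \<Rightarrow> 'a set \<Rightarrow> 'a set set \<Rightarrow> bool" where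
  "proper_subgraph V' E' V E \<longleftrightarrow> subgraph V' E' V E \<and> (V', E') \<noteq> (V, E)"

definition chi_critical :: "'a set \<Rightarrow> 'a set set \<Rightarrow> bool" where
  "chi_critical V E \<longleftrightarrow> (\<forall>V' E'. proper_subgraph V' E' V E \<longrightarrow>
      packing_chromatic V' E' < packing_chromatic V E)"

definition chi_vertex_critical :: "'a set \<Rightarrow> 'a set set \<Rightarrow> bool" where
  "chi_vertex_critical V E \<longleftrightarrow> (\<forall>x\<in>V.
      packing_chromatic (V - {x}) {e\<in>E. x \<notin> e} < packing_chromatic V E)"

end

theory Submission
  imports Defs
begin

text \<open>Deleting a vertex gives a proper subgraph, so critical implies vertex-critical.
  Conversely, a proper subgraph H of a tree G either misses a vertex x, and then lies in G - x,
  or spans G and misses an edge uv, and then lies in G - uv. As G is acyclic, G - uv has no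
  u-v path; let C be the vertices reachable from u. Then C lies in G - v and its complement
  in G - u, and since the two parts are at infinite distance, optimal packing colourings of
  G - v and G - u glue to one of G - uv. Hence
  \<open>\<chi>\<^sub>\<rho>(H) \<le> \<chi>\<^sub>\<rho>(G - uv) \<le> max \<chi>\<^sub>\<rho>(G - u) \<chi>\<^sub>\<rho>(G - v) < \<chi>\<^sub>\<rho>(G)\<close>.\<close>

lemma adj_commute: "adj E a b \<longleftrightarrow> adj E b a"
  unfolding adj_def by (simp add: insert_commute)

lemma walk_Cons:
  "walk V E (x # xs) \<longleftrightarrow> x \<in> V \<and> (xs = [] \<or> adj E x (hd xs) \<and> walk V E xs)"
  unfolding walk_def by (cases xs) (auto simp: nth_Cons less_Suc_eq_0_disj split: nat.splits)

lemma not_walk_Nil: "\<not> walk V E []"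
  unfolding walk_def by simp

lemma walk_mono: "walk V E xs \<Longrightarrow> V \<subseteq> V' \<Longrightarrow> E \<subseteq> E' \<Longrightarrow> walk V' E' xs"
  unfolding walk_def adj_def by blast

lemma walk_appendD: "walk V E (xs @ ys) \<Longrightarrow> ys \<noteq> [] \<Longrightarrow> walk V E ys"
  by (induction xs) (auto simp: walk_Cons)

lemma walk_imp_distinct_walk:
  assumes "walk V E xs"
  obtains ys where "walk V E ys" "distinct ys" "hd ys = hd xs" "last ys = last xs"
  using assms
proof (induction xs arbitrary: thesis)
  case Nil
  then show ?case by (simp add: not_walk_Nil)
next
  case (Cons x xs)
  show ?case
  proof (cases "xs = []")
    case True
    then show ?thesis using Cons.prems by (intro Cons.prems(1)[of "[x]"]) auto
  next
    case False
    then have x: "x \<in> V" "adj E x (hd xs)" and "walk V E xs"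
      using Cons.prems(2) by (auto simp: walk_Cons)
    then obtain ys where ys: "walk V E ys" "distinct ys" "hd ys = hd xs" "last ys = last xs"
      using Cons.IH by blast
    have "ys \<noteq> []" using ys(1) not_walk_Nil by blast
    show ?thesis
    proof (cases "x \<in> set ys")
      case True
      then obtain p q where "ys = p @ x # q" by (meson split_list)
      then show ?thesis
        using ys walk_appendD[of V E p "x # q"] \<open>xs \<noteq> []\<close>
        by (intro Cons.prems(1)[of "x # q"]) auto
    next
      case False
      then show ?thesis
        using x ys \<open>ys \<noteq> []\<close> \<open>xs \<noteq> []\<close>
        by (intro Cons.prems(1)[of "x # ys"]) (auto simp: walk_Cons)
    qed
  qed
qed

lemma rtranclp_adj_imp_walk:
  assumes "(adj E)\<^sup>*\<^sup>* a b" "b \<in> V" "\<forall>e\<in>E. e \<subseteq> V"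
  obtains xs where "walk V E xs" "hd xs = a" "last xs = b"
  using assms(1)
proof (induction arbitrary: thesis rule: converse_rtranclp_induct)
  case base
  then show ?case using assms(2) by (intro base[of "[b]"]) (auto simp: walk_Cons)
next
  case (step y z)
  then obtain xs where xs: "walk V E xs" "hd xs = z" "last xs = b" by blast
  have "xs \<noteq> []" using xs(1) not_walk_Nil by blast
  moreover have "y \<in> V" using step(1) assms(3) unfolding adj_def by blast
  ultimately show ?case
    using xs step(1) by (intro step.prems[of "y # xs"]) (auto simp: walk_Cons)
qed

definition component_closed :: "'a set \<Rightarrow> 'a set set \<Rightarrow> 'a set \<Rightarrow> bool" where
  "component_closed V E C \<longleftrightarrow> C \<subseteq> V \<and> (\<forall>a\<in>C. \<forall>b\<in>V. adj E a b \<longrightarrow> b \<in> C)"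

lemma component_closed_Diff:
  "component_closed V E C \<Longrightarrow> component_closed V E (V - C)"
  unfolding component_closed_def by (metis Diff_iff Diff_subset adj_commute)

lemma component_closed_reachable: "component_closed V E {w \<in> V. (adj E)\<^sup>*\<^sup>* u w}"
  unfolding component_closed_def by (blast intro: rtranclp.rtrancl_into_rtrancl)

lemma walk_component_closed:
  assumes "component_closed V E C" "walk V E xs" "hd xs \<in> C"
  shows "walk C {e \<in> E. e \<subseteq> C} xs"
  using assms(2,3)
proof (induction xs)
  case Nil
  then show ?case by (simp add: not_walk_Nil)
next
  case (Cons x xs)
  show ?case
  proof (cases "xs = []")
    case True
    then show ?thesis using Cons.prems by (simp add: walk_Cons)
  next
    case False
    then have "adj E x (hd xs)" "walk V E xs"
      using Cons.prems(1) by (simp_all add: walk_Cons)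
    moreover have "hd xs \<in> V"
      using calculation(2) False hd_in_set unfolding walk_def by blast
    moreover have "hd xs \<in> C"
      using calculation assms(1) Cons.prems(2) unfolding component_closed_def by simp
    ultimately show ?thesis
      using Cons.IH Cons.prems(2) False by (simp add: walk_Cons adj_def)
  qed
qed

lemma gdist_mono_walks:
  assumes "\<And>xs. walk V E xs \<Longrightarrow> hd xs = a \<Longrightarrow> last xs = b \<Longrightarrow> walk V' E' xs"
  shows "gdist V' E' a b \<le> gdist V E a b"
  unfolding gdist_def by (rule INF_superset_mono) (use assms in auto)

lemma gdist_notin:
  assumes "b \<notin> V"
  shows "gdist V E a b = \<infinity>"
proof -
  from assms have no_walk: "{xs. walk V E xs \<and> hd xs = a \<and> last xs = b} = {}"
    using last_in_set unfolding walk_def by blast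
  show ?thesis unfolding gdist_def no_walk by (simp add: top_enat_def)
qed

lemma gdist_component_closed:
  assumes "component_closed V E C" "a \<in> C"
  shows "gdist C {e \<in> E. e \<subseteq> C} a b \<le> gdist V E a b"
  using walk_component_closed[OF assms(1)] assms(2) by (intro gdist_mono_walks) auto

lemma packing_coloring_mono_colors:
  "packing_coloring V E k c \<Longrightarrow> k \<le> k' \<Longrightarrow> packing_coloring V E k' c"
  unfolding packing_coloring_def by auto

lemma packing_coloring_subgraph:
  assumes "subgraph V' E' V E" "packing_coloring V E k c"
  shows "packing_coloring V' E' k c"
proof -
  have sub: "V' \<subseteq> V" "E' \<subseteq> E" using assms(1) unfolding subgraph_def by auto
  then have "gdist V E u v \<le> gdist V' E' u v" for u v
    by (intro gdist_mono_walks) (rule walk_mono)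
  then show ?thesis
    using assms(2) sub unfolding packing_coloring_def by (blast intro: less_le_trans)
qed

lemma packing_coloring_card:
  assumes "finite V"
  obtains c where "packing_coloring V E (card V) c"
proof -
  obtain h where h: "bij_betw h V {0..<card V}"
    using ex_bij_betw_finite_nat assms by blast
  then have "packing_coloring V E (card V) (\<lambda>x. Suc (h x))"
    unfolding packing_coloring_def bij_betw_def inj_on_def by (auto simp: Suc_le_eq)
  then show ?thesis by (rule that)
qed

lemma packing_chromatic_le: "packing_coloring V E k c \<Longrightarrow> packing_chromatic V E \<le> k"
  unfolding packing_chromatic_def by (rule Least_le) (rule exI)

lemma packing_chromatic_coloring:
  assumes "finite V"
  obtains c where "packing_coloring V E (packing_chromatic V E) c"
proof -
  obtain c where "packing_coloring V E (card V) c"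
    using packing_coloring_card[OF assms] .
  then have "\<exists>c. packing_coloring V E (card V) c" by blast
  then have "\<exists>c. packing_coloring V E (packing_chromatic V E) c"
    unfolding packing_chromatic_def by (rule LeastI)
  then show ?thesis using that by blast
qed

lemma packing_chromatic_subgraph:
  assumes "subgraph V' E' V E" "finite V"
  shows "packing_chromatic V' E' \<le> packing_chromatic V E"
proof -
  obtain c where "packing_coloring V E (packing_chromatic V E) c"
    using packing_chromatic_coloring[OF assms(2)] .
  then show ?thesis
    by (intro packing_chromatic_le[OF packing_coloring_subgraph[OF assms(1)]])
qed

lemma packing_coloring_union:
  assumes "component_closed V E C"
    and "packing_coloring C {e \<in> E. e \<subseteq> C} k c1"
    and "packing_coloring (V - C) {e \<in> E. e \<subseteq> V - C} k c2"
  shows "packing_coloring V E k (\<lambda>w. if w \<in> C then c1 w else c2 w)"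
    (is "packing_coloring V E k ?c")
proof -
  have far: "enat (?c w) < gdist V E w w'"
    if S: "component_closed V E S" "packing_coloring S {e \<in> E. e \<subseteq> S} k cS"
      and agree: "\<forall>x\<in>S. ?c x = cS x"
      and w: "w \<in> S" "w' \<in> V" "w \<noteq> w'" "?c w = ?c w'"
    for S cS w w'
  proof -
    have "enat (cS w) < gdist S {e \<in> E. e \<subseteq> S} w w'"
    proof (cases "w' \<in> S")
      case True
      then show ?thesis using S(2) w agree unfolding packing_coloring_def by auto
    next
      case False
      then show ?thesis by (simp add: gdist_notin)
    qed
    also have "\<dots> \<le> gdist V E w w'"
      using gdist_component_closed[OF S(1) w(1)] .
    finally show ?thesis using agree w(1) by simp
  qed
  have closed: "component_closed V E C" "component_closed V E (V - C)"
    using assms(1) by (simp_all add: component_closed_Diff)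
  show ?thesis
    unfolding packing_coloring_def
  proof (intro conjI ballI impI)
    fix w assume "w \<in> V"
    then show "?c w \<in> {1..k}"
      using assms(2,3) unfolding packing_coloring_def by auto
  next
    fix w w' assume "w \<in> V" "w' \<in> V" "w \<noteq> w' \<and> ?c w = ?c w'"
    then show "enat (?c w) < gdist V E w w'"
      using far[OF closed(1) assms(2)] far[OF closed(2) assms(3)] by (cases "w \<in> C") auto
  qed
qed

lemma packing_chromatic_le_max_closed:
  assumes "finite V" "component_closed V E C"
  shows "packing_chromatic V E \<le>
    max (packing_chromatic C {e \<in> E. e \<subseteq> C}) (packing_chromatic (V - C) {e \<in> E. e \<subseteq> V - C})"
    (is "_ \<le> max ?k1 ?k2")
proof -
  have "finite C"
    using assms finite_subset unfolding component_closed_def by blast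
  then obtain c1 where c1: "packing_coloring C {e \<in> E. e \<subseteq> C} ?k1 c1"
    by (rule packing_chromatic_coloring)
  have "finite (V - C)"
    using assms(1) by blast
  then obtain c2 where c2: "packing_coloring (V - C) {e \<in> E. e \<subseteq> V - C} ?k2 c2"
    by (rule packing_chromatic_coloring)
  have "packing_coloring V E (max ?k1 ?k2) (\<lambda>w. if w \<in> C then c1 w else c2 w)"
    by (intro packing_coloring_union[OF assms(2)] packing_coloring_mono_colors[OF c1]
        packing_coloring_mono_colors[OF c2] max.cobounded1 max.cobounded2)
  then show ?thesis by (rule packing_chromatic_le)
qed

lemma packing_chromatic_separated_le:
  assumes "finite V" "\<not> (adj E)\<^sup>*\<^sup>* u v"
  shows "packing_chromatic V E \<le>
    max (packing_chromatic (V - {v}) {e \<in> E. v \<notin> e}) (packing_chromatic (V - {u}) {e \<in> E. u \<notin> e})"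
proof -
  define C where "C = {w \<in> V. (adj E)\<^sup>*\<^sup>* u w}"
  have "C \<subseteq> V" "v \<notin> C" "u \<notin> V - C"
    using assms(2) unfolding C_def by auto
  then have sub_v: "subgraph C {e \<in> E. e \<subseteq> C} (V - {v}) {e \<in> E. v \<notin> e}"
    and sub_u: "subgraph (V - C) {e \<in> E. e \<subseteq> V - C} (V - {u}) {e \<in> E. u \<notin> e}"
    unfolding subgraph_def by blast+
  have "packing_chromatic V E \<le>
      max (packing_chromatic C {e \<in> E. e \<subseteq> C}) (packing_chromatic (V - C) {e \<in> E. e \<subseteq> V - C})"
    unfolding C_def using assms(1) component_closed_reachable by (rule packing_chromatic_le_max_closed)
  also have "\<dots> \<le>
      max (packing_chromatic (V - {v}) {e \<in> E. v \<notin> e}) (packing_chromatic (V - {u}) {e \<in> E. u \<notin> e})"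
    using assms(1) sub_u sub_v by (intro max.mono packing_chromatic_subgraph) auto
  finally show ?thesis .
qed

lemma graph_edge_subset: "graph V E \<Longrightarrow> e \<in> E \<Longrightarrow> e \<subseteq> V"
  unfolding graph_def by auto

lemma acyclic_not_rtranclp_delete_edge:
  assumes "graph V E" "acyclic_graph V E" "{u, v} \<in> E" "u \<noteq> v"
  shows "\<not> (adj (E - {{u, v}}))\<^sup>*\<^sup>* u v"
proof
  assume "(adj (E - {{u, v}}))\<^sup>*\<^sup>* u v"
  moreover have "v \<in> V" "\<forall>e \<in> E - {{u, v}}. e \<subseteq> V"
    using assms(1,3) graph_edge_subset by blast+
  ultimately obtain xs where xs: "walk V (E - {{u, v}}) xs" "hd xs = u" "last xs = v"
    by (rule rtranclp_adj_imp_walk)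
  obtain ys where ys: "walk V (E - {{u, v}}) ys" "distinct ys" "hd ys = u" "last ys = v"
    using xs(1) by (rule walk_imp_distinct_walk) (simp_all add: xs(2,3))
  have "ys \<noteq> []"
    using ys(1) not_walk_Nil by blast
  then obtain zs where zs: "ys = u # zs"
    using ys(3) by (cases ys) auto
  have "\<not> length ys < 3"
  proof
    assume "length ys < 3"
    moreover have "zs \<noteq> []"
      using zs ys(4) assms(4) by auto
    ultimately have "ys = [u, v]"
      using zs ys(4) by (cases zs) auto
    then show False
      using ys(1) by (simp add: walk_Cons adj_def)
  qed
  moreover have "walk V E ys"
    using walk_mono[OF ys(1) subset_refl Diff_subset] .
  moreover have "adj E (last ys) (hd ys)"
    using assms(3) ys(3,4) by (simp add: adj_def insert_commute)
  ultimately have "is_cycle V E ys"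
    unfolding is_cycle_def using ys(2) by simp
  then show False using assms(2) unfolding acyclic_graph_def by blast
qed

lemma proper_subgraph_cases:
  assumes "graph V E" "proper_subgraph V' E' V E"
  obtains x where "x \<in> V" "subgraph V' E' (V - {x}) {e \<in> E. x \<notin> e}"
  | u v where "{u, v} \<in> E" "u \<noteq> v" "subgraph V' E' V (E - {{u, v}})"
proof (cases "V' = V")
  case False
  with assms(2) obtain x where "x \<in> V" "x \<notin> V'"
    unfolding proper_subgraph_def subgraph_def by blast
  moreover from assms(2) \<open>x \<notin> V'\<close> have "subgraph V' E' (V - {x}) {e \<in> E. x \<notin> e}"
    unfolding proper_subgraph_def subgraph_def by blast
  ultimately show ?thesis using that(1) by blast
next
  case True
  with assms(2) obtain f where "f \<in> E" "f \<notin> E'"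
    unfolding proper_subgraph_def subgraph_def by blast
  moreover obtain u v where "f = {u, v}" "u \<noteq> v"
    using assms(1) \<open>f \<in> E\<close> unfolding graph_def by blast
  moreover from assms(2) True \<open>f \<notin> E'\<close> have "subgraph V' E' V (E - {f})"
    unfolding proper_subgraph_def subgraph_def by blast
  ultimately show ?thesis by (intro that(2)) simp_all
qed

lemma chi_critical_imp_vertex_critical:
  assumes "graph V E" "chi_critical V E"
  shows "chi_vertex_critical V E"
  unfolding chi_vertex_critical_def
proof
  fix x assume "x \<in> V"
  then have "proper_subgraph (V - {x}) {e \<in> E. x \<notin> e} V E"
    using assms(1) graph_edge_subset unfolding proper_subgraph_def subgraph_def by blast
  then show "packing_chromatic (V - {x}) {e \<in> E. x \<notin> e} < packing_chromatic V E"
    using assms(2) unfolding chi_critical_def by blast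
qed

lemma acyclic_vertex_critical_imp_critical:
  assumes "graph V E" "acyclic_graph V E" "chi_vertex_critical V E"
  shows "chi_critical V E"
  unfolding chi_critical_def
proof (intro allI impI)
  fix V' E' assume "proper_subgraph V' E' V E"
  have "finite V" using assms(1) unfolding graph_def by blast
  have delete_vertex: "packing_chromatic (V - {x}) {e \<in> E. x \<notin> e} < packing_chromatic V E"
    if "x \<in> V" for x
    using assms(3) that unfolding chi_vertex_critical_def by blast
  from assms(1) \<open>proper_subgraph V' E' V E\<close>
  show "packing_chromatic V' E' < packing_chromatic V E"
  proof (cases rule: proper_subgraph_cases)
    case (1 x)
    have "packing_chromatic V' E' \<le> packing_chromatic (V - {x}) {e \<in> E. x \<notin> e}"
      using 1(2) \<open>finite V\<close> by (intro packing_chromatic_subgraph) auto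
    also have "\<dots> < packing_chromatic V E"
      using 1(1) by (rule delete_vertex)
    finally show ?thesis .
  next
    case (2 u v)
    then have "u \<in> V" "v \<in> V"
      using assms(1) graph_edge_subset by blast+
    have avoid_v: "{e \<in> E - {{u, v}}. v \<notin> e} = {e \<in> E. v \<notin> e}"
      and avoid_u: "{e \<in> E - {{u, v}}. u \<notin> e} = {e \<in> E. u \<notin> e}"
      by auto
    have "packing_chromatic V' E' \<le> packing_chromatic V (E - {{u, v}})"
      using 2(3) \<open>finite V\<close> by (rule packing_chromatic_subgraph)
    also have "\<dots> \<le> max (packing_chromatic (V - {v}) {e \<in> E. v \<notin> e})
                        (packing_chromatic (V - {u}) {e \<in> E. u \<notin> e})"
      using packing_chromatic_separated_le[OF \<open>finite V\<close>
          acyclic_not_rtranclp_delete_edge[OF assms(1,2) 2(1,2)]]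
      by (simp only: avoid_u avoid_v)
    also have "\<dots> < packing_chromatic V E"
      using delete_vertex \<open>u \<in> V\<close> \<open>v \<in> V\<close> by simp
    finally show ?thesis .
  qed
qed

theorem theorem3p5:
  fixes V :: "'a set" and E :: "'a set set"
  assumes "tree V E"
  shows "chi_critical V E \<longleftrightarrow> chi_vertex_critical V E"
  using assms chi_critical_imp_vertex_critical acyclic_vertex_critical_imp_critical
  unfolding tree_def by blast

end
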